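(* For $x,y\in\mathrm{dS}^d$ the following are equivalent: (i) $(x,y)\in G_{\mathbb C}.(\Xi_+\times\Xi_+)$; (ii) $\beta(x,y)>-1$; (iii) $\beta(x-y,x-y)<0$. In particular $\{x\in\mathrm{dS}^d:(x,e_1)\in G_{\mathbb C}.(\Xi_+\times\Xi_+)\}=\{x\in\mathrm{dS}^d: x_1<1\}$.
   Context: Let $d\ge1$. On $\mathbb C^{1+d}$ (standard basis $e_0,\dots,e_d$) let $\beta(z,w)=z_0w_0-z_1w_1-\dots-z_dw_d$, $V=\mathbb R^{1+d}$, $V_+=\{x\in V:x_0>0,\beta(x,x)>0\}$, $\mathrm{dS}^d_{\mathbb C}=\{z:\beta(z,z)=-1\}$, $\mathrm{dS}^d=\mathrm{dS}^d_{\mathbb C}\cap V$ (de Sitter space), $\Xi_+=\mathrm{dS}^d_{\mathbb C}\cap(V+iV_+)$. $G_{\mathbb C}=\mathrm{SO}_{1+d}(\mathbb C)$ (determinant-one complex linear maps preserving $\beta$) acts on pairs by $g.(z,w)=(gz,\overline g w)$, where $\overline g$ is the entrywise complex conjugate. *)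

theory Defs
  imports "Jordan_Normal_Form.Determinant"
begin

(* Vectors in C^{1+d} / R^{1+d} are JNF vectors of dimension d+1, indices 0..d. *)

definition beta :: "nat \<Rightarrow> 'a::comm_ring_1 vec \<Rightarrow> 'a vec \<Rightarrow> 'a" where
  "beta d z w = z $ 0 * w $ 0 - (\<Sum>i\<in>{1..d}. z $ i * w $ i)"

definition Vplus :: "nat \<Rightarrow> real vec set" where
  "Vplus d = {x \<in> carrier_vec (d+1). x $ 0 > 0 \<and> beta d x x > 0}"

definition dSC :: "nat \<Rightarrow> complex vec set" where
  "dSC d = {z \<in> carrier_vec (d+1). beta d z z = -1}"

definition dS :: "nat \<Rightarrow> real vec set" where
  "dS d = {x \<in> carrier_vec (d+1). beta d x x = -1}"

definition XiPlus :: "nat \<Rightarrow> complex vec set" where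
  "XiPlus d = {z \<in> dSC d. map_vec Im z \<in> Vplus d}"

definition GC :: "nat \<Rightarrow> complex mat set" where
  "GC d = {g \<in> carrier_mat (d+1) (d+1). det g = 1 \<and>
      (\<forall>z \<in> carrier_vec (d+1). \<forall>w \<in> carrier_vec (d+1). beta d (g *\<^sub>v z) (g *\<^sub>v w) = beta d z w)}"

definition GXi :: "nat \<Rightarrow> (complex vec \<times> complex vec) set" where
  "GXi d = {(g *\<^sub>v z, map_mat cnj g *\<^sub>v w) | g z w. g \<in> GC d \<and> z \<in> XiPlus d \<and> w \<in> XiPlus d}"

abbreviation cvec :: "real vec \<Rightarrow> complex vec" where
  "cvec x \<equiv> map_vec complex_of_real x"

end

(*
  Write z = a + i b and w = c + i e for z, w in the crown. The equations
  beta(z,z) = beta(w,w) = -1 say that a is orthogonal to b, c to e, and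
  beta(a,a) = beta(b,b) - 1, beta(c,c) = beta(e,e) - 1. If (x, y) = (g z, conj(g) w)
  with x, y real, then beta(x,y) = beta(z, conj w) is real, i.e. a - c is orthogonal
  to the future timelike vector b + e. Hence beta(a - c, a - c) <= 0, which expands
  to beta(x,y) = beta(a,c) + beta(b,e) > -1.

  Conversely, if beta(x,y) > -1, then x = m + r f and y = m - r f with f a unit
  spacelike vector orthogonal to m and r^2 = beta(m,m) + 1 > 0, and there is a unit
  timelike e orthogonal to f with beta(m,e)^2 < r^2. The boosts of rapidity +-i pi/2
  in the plane spanned by e and f map x and y to points with imaginary parts
  r e +- beta(m,e) f, which lie in V_+ for a suitable sign of e; so these points lie
  in the crown. The boost of rapidity -i pi/2 maps them back to x and y, and it lies
  in SO(1+d, C): it preserves beta, and being the square of the boost of rapidity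
  -i pi/4, whose determinant is +-1, it has determinant 1.

  Finally beta(x - y, x - y) = -2 - 2 beta(x,y) on de Sitter space.
*)

theory Submission
  imports Defs "HOL-Analysis.Convex"
begin

section \<open>Bilinear algebra of \<open>\<beta>\<close>\<close>

lemma beta_commute: "beta d u w = beta d w u"
  by (simp add: beta_def mult.commute)

lemma beta_add_left:
  fixes u v w :: "'a::comm_ring_1 vec"
  assumes "u \<in> carrier_vec (d+1)" "v \<in> carrier_vec (d+1)"
  shows "beta d (u + v) w = beta d u w + beta d v w"
  using assms by (simp add: beta_def algebra_simps sum.distrib)

lemma beta_diff_left:
  fixes u v w :: "'a::comm_ring_1 vec"
  assumes "u \<in> carrier_vec (d+1)" "v \<in> carrier_vec (d+1)"
  shows "beta d (u - v) w = beta d u w - beta d v w"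
  using assms by (simp add: beta_def algebra_simps sum_subtractf)

lemma beta_smult_left:
  fixes u w :: "'a::comm_ring_1 vec"
  assumes "u \<in> carrier_vec (d+1)"
  shows "beta d (a \<cdot>\<^sub>v u) w = a * beta d u w"
  using assms by (simp add: beta_def algebra_simps sum_distrib_left)

lemma beta_add_right:
  fixes u v w :: "'a::comm_ring_1 vec"
  assumes "u \<in> carrier_vec (d+1)" "v \<in> carrier_vec (d+1)"
  shows "beta d w (u + v) = beta d w u + beta d w v"
  using beta_add_left[OF assms] beta_commute by metis

lemma beta_diff_right:
  fixes u v w :: "'a::comm_ring_1 vec"
  assumes "u \<in> carrier_vec (d+1)" "v \<in> carrier_vec (d+1)"
  shows "beta d w (u - v) = beta d w u - beta d w v"
  using beta_diff_left[OF assms] beta_commute by metis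

lemma beta_smult_right:
  fixes u w :: "'a::comm_ring_1 vec"
  assumes "u \<in> carrier_vec (d+1)"
  shows "beta d w (a \<cdot>\<^sub>v u) = a * beta d w u"
  using beta_smult_left[OF assms] beta_commute by metis

lemmas beta_bilinear = beta_add_left beta_add_right beta_diff_left beta_diff_right
  beta_smult_left beta_smult_right

lemma beta_self_real: "beta d x x = (x $ 0)\<^sup>2 - (\<Sum>i\<in>{1..d}. (x $ i)\<^sup>2)"
  for x :: "real vec"
  by (simp add: beta_def power2_eq_square)

lemma beta_unit_vec:
  assumes "x \<in> carrier_vec (d+1)" "1 \<le> i" "i \<le> d"
  shows "beta d x (unit_vec (d+1) i) = - (x $ i)"
proof -
  have "(\<Sum>j\<in>{1..d}. x $ j * unit_vec (d+1) i $ j) = (\<Sum>j\<in>{1..d}. if j = i then x $ i else 0)"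
    using assms by (intro sum.cong) auto
  with assms show ?thesis
    by (simp add: beta_def)
qed

lemma unit_vec_in_dS:
  assumes "1 \<le> i" "i \<le> d"
  shows "unit_vec (d+1) i \<in> dS d"
  using beta_unit_vec[of "unit_vec (d+1) i" d i] assms by (simp add: dS_def)

lemma beta_diff_self_dS:
  assumes "x \<in> dS d" "y \<in> dS d"
  shows "beta d (x - y) (x - y) = -2 - 2 * beta d x y"
  using assms beta_commute[of d y x] by (simp add: dS_def beta_bilinear)

section \<open>The future light cone\<close>

lemma abs_sum_mult_less_if_sum_squares_less:
  fixes a b :: "'i \<Rightarrow> real"
  assumes "(\<Sum>i\<in>S. (a i)\<^sup>2) < a0\<^sup>2" and "(\<Sum>i\<in>S. (b i)\<^sup>2) < b0\<^sup>2"
  shows "\<bar>\<Sum>i\<in>S. a i * b i\<bar> < \<bar>a0\<bar> * \<bar>b0\<bar>"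
proof -
  have "\<bar>\<Sum>i\<in>S. a i * b i\<bar>\<^sup>2 \<le> (\<Sum>i\<in>S. (a i)\<^sup>2) * (\<Sum>i\<in>S. (b i)\<^sup>2)"
    using Cauchy_Schwarz_ineq_sum by simp
  also have "\<dots> < a0\<^sup>2 * b0\<^sup>2"
    using assms by (intro mult_strict_mono') (auto intro: sum_nonneg)
  also have "\<dots> = (\<bar>a0\<bar> * \<bar>b0\<bar>)\<^sup>2"
    by (simp add: power_mult_distrib)
  finally show ?thesis
    by (rule power2_less_imp_less) simp
qed

lemma Vplus_beta_pos:
  assumes "a \<in> Vplus d" "b \<in> Vplus d"
  shows "0 < beta d a b"
proof -
  have "\<bar>\<Sum>i\<in>{1..d}. a $ i * b $ i\<bar> < \<bar>a $ 0\<bar> * \<bar>b $ 0\<bar>"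
    using assms by (intro abs_sum_mult_less_if_sum_squares_less) (auto simp: Vplus_def beta_self_real)
  with assms show ?thesis
    by (simp add: beta_def Vplus_def)
qed

lemma timelike_imp_nth_0_nonzero:
  fixes a :: "real vec"
  assumes "0 < beta d a a"
  shows "a $ 0 \<noteq> 0"
  using assms sum_nonneg[of "{1..d}" "\<lambda>i. (a $ i)\<^sup>2"] by (auto simp: beta_self_real)

lemma Vplus_if_beta_pos:
  fixes b :: "real vec"
  assumes a: "a \<in> Vplus d" and b: "b \<in> carrier_vec (d+1)" "0 < beta d b b"
    and ab: "0 < beta d a b"
  shows "b \<in> Vplus d"
proof (rule ccontr)
  assume "b \<notin> Vplus d"
  with b timelike_imp_nth_0_nonzero[of d b] have "(-1) \<cdot>\<^sub>v b \<in> Vplus d"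
    by (auto simp: Vplus_def beta_bilinear)
  with a have "0 < beta d a ((-1) \<cdot>\<^sub>v b)"
    by (rule Vplus_beta_pos)
  with ab b show False
    by (simp add: beta_bilinear)
qed

lemma beta_self_nonpos_if_orthogonal_timelike:
  fixes a v :: "real vec"
  assumes "0 < beta d v v" and "beta d a v = 0"
  shows "beta d a a \<le> 0"
proof (rule ccontr)
  assume "\<not> beta d a a \<le> 0"
  with assms have "\<bar>\<Sum>i\<in>{1..d}. a $ i * v $ i\<bar> < \<bar>a $ 0\<bar> * \<bar>v $ 0\<bar>"
    by (intro abs_sum_mult_less_if_sum_squares_less) (auto simp: beta_self_real)
  moreover have "a $ 0 * v $ 0 = (\<Sum>i\<in>{1..d}. a $ i * v $ i)"
    using assms(2) by (simp add: beta_def)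
  ultimately show False
    by (simp add: abs_mult)
qed

section \<open>Pairs in the orbit of the crown\<close>

lemma Re_beta:
  fixes z w :: "complex vec"
  assumes "z \<in> carrier_vec (d+1)" "w \<in> carrier_vec (d+1)"
  shows "Re (beta d z w) = beta d (map_vec Re z) (map_vec Re w) - beta d (map_vec Im z) (map_vec Im w)"
  using assms by (simp add: beta_def sum_subtractf algebra_simps)

lemma Im_beta:
  fixes z w :: "complex vec"
  assumes "z \<in> carrier_vec (d+1)" "w \<in> carrier_vec (d+1)"
  shows "Im (beta d z w) = beta d (map_vec Re z) (map_vec Im w) + beta d (map_vec Im z) (map_vec Re w)"
  using assms by (simp add: beta_def sum_subtractf sum.distrib algebra_simps)

lemma Re_beta_cnj:
  fixes z w :: "complex vec"
  assumes "z \<in> carrier_vec (d+1)" "w \<in> carrier_vec (d+1)"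
  shows "Re (beta d z (map_vec cnj w)) = beta d (map_vec Re z) (map_vec Re w) + beta d (map_vec Im z) (map_vec Im w)"
  using assms by (simp add: beta_def sum_subtractf sum.distrib algebra_simps)

lemma Im_beta_cnj:
  fixes z w :: "complex vec"
  assumes "z \<in> carrier_vec (d+1)" "w \<in> carrier_vec (d+1)"
  shows "Im (beta d z (map_vec cnj w)) = beta d (map_vec Im z) (map_vec Re w) - beta d (map_vec Re z) (map_vec Im w)"
  using assms by (simp add: beta_def sum_subtractf sum.distrib algebra_simps)

lemma beta_cvec:
  assumes "x \<in> carrier_vec (d+1)" "y \<in> carrier_vec (d+1)"
  shows "beta d (cvec x) (cvec y) = complex_of_real (beta d x y)"
  using assms by (simp add: beta_def)

lemma map_mat_cnj_mult_vec:
  fixes A :: "complex mat"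
  assumes "A \<in> carrier_mat n n" "v \<in> carrier_vec n"
  shows "map_mat cnj A *\<^sub>v v = map_vec cnj (A *\<^sub>v map_vec cnj v)"
  using assms by (intro eq_vecI) (auto simp: scalar_prod_def)

lemma GXi_cvec_imp_beta_cnj:
  assumes "(cvec x, cvec y) \<in> GXi d" and "x \<in> carrier_vec (d+1)" "y \<in> carrier_vec (d+1)"
  obtains z w where "z \<in> XiPlus d" "w \<in> XiPlus d"
    and "beta d z (map_vec cnj w) = complex_of_real (beta d x y)"
proof -
  from assms(1) obtain g z w where g: "g \<in> GC d" and z: "z \<in> XiPlus d" and w: "w \<in> XiPlus d"
    and xz: "cvec x = g *\<^sub>v z" and yw: "cvec y = map_mat cnj g *\<^sub>v w"
    unfolding GXi_def by auto
  have gc: "g \<in> carrier_mat (d+1) (d+1)" using g by (simp add: GC_def)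
  have zc: "z \<in> carrier_vec (d+1)" and wc: "w \<in> carrier_vec (d+1)"
    using z w by (auto simp: XiPlus_def dSC_def)
  have "cvec y = map_vec cnj (cvec y)"
    using assms(3) by (intro eq_vecI) auto
  also have "\<dots> = g *\<^sub>v map_vec cnj w"
    unfolding yw map_mat_cnj_mult_vec[OF gc wc] using gc by (intro eq_vecI) auto
  finally have "beta d (cvec x) (cvec y) = beta d (g *\<^sub>v z) (g *\<^sub>v map_vec cnj w)"
    by (simp add: xz)
  also have "\<dots> = beta d z (map_vec cnj w)"
    using g zc wc by (simp add: GC_def)
  finally show thesis
    using that z w assms(2,3) by (simp add: beta_cvec)
qed

lemma XiPlus_beta_cnj_real_gt:
  assumes z: "z \<in> XiPlus d" and w: "w \<in> XiPlus d"
    and zw: "beta d z (map_vec cnj w) = complex_of_real r"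
  shows "-1 < r"
proof -
  define a b c e where "a = map_vec Re z" and "b = map_vec Im z"
    and "c = map_vec Re w" and "e = map_vec Im w"
  have zc: "z \<in> carrier_vec (d+1)" and wc: "w \<in> carrier_vec (d+1)"
    and zz: "beta d z z = -1" and ww: "beta d w w = -1"
    and bV: "b \<in> Vplus d" and eV: "e \<in> Vplus d"
    using z w by (auto simp: XiPlus_def dSC_def b_def e_def)
  have carr: "a \<in> carrier_vec (d+1)" "b \<in> carrier_vec (d+1)" "c \<in> carrier_vec (d+1)" "e \<in> carrier_vec (d+1)"
    using zc wc by (auto simp: a_def b_def c_def e_def)
  have r: "r = beta d a c + beta d b e" and ae: "beta d b c = beta d a e"
    using arg_cong[OF zw, of Re] arg_cong[OF zw, of Im] Re_beta_cnj[OF zc wc] Im_beta_cnj[OF zc wc]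
    by (simp_all add: a_def b_def c_def e_def)
  have aa: "beta d a a = beta d b b - 1" and ab: "beta d a b = 0"
    using arg_cong[OF zz, of Re] arg_cong[OF zz, of Im] Re_beta[OF zc zc] Im_beta[OF zc zc]
      beta_commute[of d a b] by (simp_all add: a_def b_def)
  have cc: "beta d c c = beta d e e - 1" and ce: "beta d c e = 0"
    using arg_cong[OF ww, of Re] arg_cong[OF ww, of Im] Re_beta[OF wc wc] Im_beta[OF wc wc]
      beta_commute[of d c e] by (simp_all add: c_def e_def)
  have be: "0 < beta d b e"
    using bV eV by (rule Vplus_beta_pos)
  have bb_ee: "0 < beta d (b + e) (b + e)"
    using be bV eV carr by (simp add: Vplus_def beta_bilinear beta_commute[of d e b])
  moreover have "beta d (a - c) (b + e) = 0"
    using carr ab ce ae by (simp add: beta_bilinear beta_commute[of d c b])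
  ultimately have "beta d (a - c) (a - c) \<le> 0"
    by (rule beta_self_nonpos_if_orthogonal_timelike)
  with bb_ee carr aa cc show ?thesis
    unfolding r by (simp add: beta_bilinear beta_commute[of d c a] beta_commute[of d e b])
qed

lemma beta_gt_if_GXi:
  assumes "x \<in> dS d" "y \<in> dS d" "(cvec x, cvec y) \<in> GXi d"
  shows "-1 < beta d x y"
proof -
  obtain z w where "z \<in> XiPlus d" "w \<in> XiPlus d"
    and "beta d z (map_vec cnj w) = complex_of_real (beta d x y)"
    using GXi_cvec_imp_beta_cnj[OF assms(3)] assms(1,2) by (auto simp: dS_def)
  then show ?thesis
    by (rule XiPlus_beta_cnj_real_gt)
qed

section \<open>Isometries of \<open>\<beta>\<close> have determinant \<open>\<plusminus>1\<close>\<close>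

definition eta :: "nat \<Rightarrow> complex" where
  "eta j = (if j = 0 then 1 else -1)"

definition eta_mat :: "nat \<Rightarrow> complex mat" where
  "eta_mat d = mat (d+1) (d+1) (\<lambda>(i, j). if i = j then eta i else 0)"

lemma eta_mat_carrier: "eta_mat d \<in> carrier_mat (d+1) (d+1)"
  by (simp add: eta_mat_def)

lemma beta_eq_sum_eta: "beta d v w = (\<Sum>j<d+1. eta j * v $ j * w $ j)"
  for v w :: "complex vec"
proof -
  have "{..<d+1} = insert 0 {1..d}"
    by auto
  then show ?thesis
    by (simp add: beta_def eta_def sum_negf)
qed

lemma eta_mat_mult_vec:
  assumes "w \<in> carrier_vec (d+1)"
  shows "eta_mat d *\<^sub>v w = vec (d+1) (\<lambda>i. eta i * w $ i)"
proof (rule eq_vecI)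
  fix i assume "i < dim_vec (vec (d+1) (\<lambda>i. eta i * w $ i))"
  then have i: "i < d+1" by simp
  have "(eta_mat d *\<^sub>v w) $ i = (\<Sum>j<d+1. (if i = j then eta i else 0) * w $ j)"
    using i assms by (simp add: eta_mat_def scalar_prod_def lessThan_atLeast0)
  also have "\<dots> = eta i * w $ i"
    using i by (simp add: if_distrib[of "\<lambda>x. x * _"] cong: if_cong)
  finally show "(eta_mat d *\<^sub>v w) $ i = vec (d+1) (\<lambda>i. eta i * w $ i) $ i"
    using i by simp
qed (simp add: eta_mat_def)

lemma beta_eq_scalar_prod_eta_mat:
  fixes z w :: "complex vec"
  assumes "z \<in> carrier_vec (d+1)" "w \<in> carrier_vec (d+1)"
  shows "beta d z w = scalar_prod z (eta_mat d *\<^sub>v w)"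
  using assms by (simp add: eta_mat_mult_vec beta_eq_sum_eta scalar_prod_def lessThan_atLeast0 algebra_simps)

lemma mat_entry_eq_scalar_prod_unit_vec:
  fixes A :: "'a::semiring_1 mat"
  assumes "A \<in> carrier_mat n n" "i < n" "j < n"
  shows "A $$ (i, j) = scalar_prod (unit_vec n i) (A *\<^sub>v unit_vec n j)"
  using assms by (subst scalar_prod_left_unit[of _ n]) auto

lemma transpose_eta_mat_mult_if_preserves_beta:
  fixes g :: "complex mat"
  assumes g: "g \<in> carrier_mat (d+1) (d+1)"
    and pres: "\<And>z w. z \<in> carrier_vec (d+1) \<Longrightarrow> w \<in> carrier_vec (d+1) \<Longrightarrow>
      beta d (g *\<^sub>v z) (g *\<^sub>v w) = beta d z w"
  shows "transpose_mat g * eta_mat d * g = eta_mat d"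
proof (rule eq_matI)
  note J = eta_mat_carrier[of d]
  fix i j assume "i < dim_row (eta_mat d)" "j < dim_col (eta_mat d)"
  then have i: "i < d+1" and j: "j < d+1"
    by (auto simp: eta_mat_def)
  let ?u = "unit_vec (d+1) i" and ?v = "unit_vec (d+1) j"
  let ?x = "eta_mat d *\<^sub>v (g *\<^sub>v ?v)"
  have x: "?x \<in> carrier_vec (d+1)"
    using g J by simp
  have "(transpose_mat g * eta_mat d * g) $$ (i, j) = scalar_prod ?u ((transpose_mat g * eta_mat d * g) *\<^sub>v ?v)"
    using g J i j by (intro mat_entry_eq_scalar_prod_unit_vec) auto
  also have "(transpose_mat g * eta_mat d * g) *\<^sub>v ?v = transpose_mat g *\<^sub>v ?x"
    using g J by (simp add: assoc_mult_mat_vec[of _ "d+1" "d+1" _ "d+1"])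
  also have "scalar_prod ?u (transpose_mat g *\<^sub>v ?x) = scalar_prod (g *\<^sub>v ?u) ?x"
    using g x comm_scalar_prod[of ?u "d+1" "transpose_mat g *\<^sub>v ?x"]
      comm_scalar_prod[of ?x "d+1" "g *\<^sub>v ?u"] transpose_vec_mult_scalar[of g "d+1" "d+1" ?u ?x]
    by simp
  also have "\<dots> = beta d ?u ?v"
    using g by (simp add: beta_eq_scalar_prod_eta_mat[symmetric] pres)
  also have "\<dots> = eta_mat d $$ (i, j)"
    using i j J by (simp add: beta_eq_scalar_prod_eta_mat)
  finally show "(transpose_mat g * eta_mat d * g) $$ (i, j) = eta_mat d $$ (i, j)" .
qed (use g in \<open>auto simp: eta_mat_def\<close>)

lemma det_eta_mat_nonzero: "det (eta_mat d) \<noteq> 0"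
proof -
  have "upper_triangular (eta_mat d)"
    by (auto simp: upper_triangular_def eta_mat_def)
  then have "det (eta_mat d) = prod_list (diag_mat (eta_mat d))"
    by (rule det_upper_triangular) (rule eta_mat_carrier)
  moreover have "0 \<notin> set (diag_mat (eta_mat d))"
    by (auto simp: diag_mat_def eta_mat_def eta_def)
  ultimately show ?thesis
    by simp
qed

lemma det_square_if_preserves_beta:
  fixes g :: "complex mat"
  assumes g: "g \<in> carrier_mat (d+1) (d+1)"
    and "\<And>z w. z \<in> carrier_vec (d+1) \<Longrightarrow> w \<in> carrier_vec (d+1) \<Longrightarrow>
      beta d (g *\<^sub>v z) (g *\<^sub>v w) = beta d z w"
  shows "det g * det g = 1"
proof -
  have "det (eta_mat d) = det (transpose_mat g * eta_mat d * g)"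
    using transpose_eta_mat_mult_if_preserves_beta[OF assms] by simp
  also have "\<dots> = det g * det g * det (eta_mat d)"
    using g eta_mat_carrier[of d] by (simp add: det_mult[of _ "d+1"] det_transpose)
  finally show ?thesis
    using det_eta_mat_nonzero[of d] by simp
qed

section \<open>Complex boosts\<close>

definition orthonormal_pair :: "nat \<Rightarrow> 'a::comm_ring_1 vec \<Rightarrow> 'a vec \<Rightarrow> bool" where
  "orthonormal_pair d e f \<longleftrightarrow> e \<in> carrier_vec (d+1) \<and> f \<in> carrier_vec (d+1)
    \<and> beta d e e = 1 \<and> beta d f f = -1 \<and> beta d e f = 0"

lemma orthonormal_pair_cvec:
  assumes "orthonormal_pair d e f"
  shows "orthonormal_pair d (cvec e) (cvec f)"
  using assms by (simp add: orthonormal_pair_def beta_cvec)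

text \<open>For an orthonormal pair \<open>e, f\<close> and \<open>c\<^sup>2 - s\<^sup>2 = 1\<close>, \<open>boost d e f c s\<close> is the hyperbolic
  rotation of the plane spanned by \<open>e, f\<close> with \<open>cosh = c\<close>, \<open>sinh = s\<close>, extended by the identity
  on the \<open>\<beta>\<close>-orthogonal complement of that plane.\<close>

definition boost ::
    "nat \<Rightarrow> complex vec \<Rightarrow> complex vec \<Rightarrow> complex \<Rightarrow> complex \<Rightarrow> complex vec \<Rightarrow> complex vec"
  where "boost d e f c s v = v + ((c - 1) * beta d v e - s * beta d v f) \<cdot>\<^sub>v e
    + (s * beta d v e - (c - 1) * beta d v f) \<cdot>\<^sub>v f"

definition boost_mat :: "nat \<Rightarrow> complex vec \<Rightarrow> complex vec \<Rightarrow> complex \<Rightarrow> complex \<Rightarrow> complex mat"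
  where "boost_mat d e f c s = mat (d+1) (d+1) (\<lambda>(i, j). (if i = j then 1 else 0)
    + eta j * (((c - 1) * e $ j - s * f $ j) * e $ i + (s * e $ j - (c - 1) * f $ j) * f $ i))"

lemma boost_mat_carrier: "boost_mat d e f c s \<in> carrier_mat (d+1) (d+1)"
  by (simp add: boost_mat_def)

lemma boost_carrier:
  assumes "v \<in> carrier_vec (d+1)" "e \<in> carrier_vec (d+1)" "f \<in> carrier_vec (d+1)"
  shows "boost d e f c s v \<in> carrier_vec (d+1)"
  using assms by (simp add: boost_def)

lemma boost_mat_mult_vec:
  assumes v: "v \<in> carrier_vec (d+1)" and e: "e \<in> carrier_vec (d+1)" and f: "f \<in> carrier_vec (d+1)"
  shows "boost_mat d e f c s *\<^sub>v v = boost d e f c s v"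
proof (rule eq_vecI)
  fix i assume "i < dim_vec (boost d e f c s v)"
  then have i: "i < d+1"
    using assms by (simp add: boost_def)
  have "(boost_mat d e f c s *\<^sub>v v) $ i = (\<Sum>j<d+1. (if i = j then 1 else 0) * v $ j
     + e $ i * (eta j * ((c - 1) * e $ j - s * f $ j) * v $ j)
     + f $ i * (eta j * (s * e $ j - (c - 1) * f $ j) * v $ j))"
    using i v by (simp add: boost_mat_def scalar_prod_def lessThan_atLeast0 algebra_simps)
  also have "\<dots> = (\<Sum>j<d+1. (if i = j then 1 else 0) * v $ j)
     + e $ i * (\<Sum>j<d+1. eta j * ((c - 1) * e $ j - s * f $ j) * v $ j)
     + f $ i * (\<Sum>j<d+1. eta j * (s * e $ j - (c - 1) * f $ j) * v $ j)"
    by (simp only: sum.distrib sum_distrib_left)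
  also have "(\<Sum>j<d+1. (if i = j then 1 else 0) * v $ j) = v $ i"
    using i by (simp add: if_distrib[of "\<lambda>x. x * _"] cong: if_cong)
  also have "(\<Sum>j<d+1. eta j * ((c - 1) * e $ j - s * f $ j) * v $ j) = (c - 1) * beta d v e - s * beta d v f"
    by (simp add: beta_eq_sum_eta sum_distrib_left sum_subtractf sum.distrib algebra_simps)
  also have "(\<Sum>j<d+1. eta j * (s * e $ j - (c - 1) * f $ j) * v $ j) = s * beta d v e - (c - 1) * beta d v f"
    by (simp add: beta_eq_sum_eta sum_distrib_left sum_subtractf sum.distrib algebra_simps)
  finally show "(boost_mat d e f c s *\<^sub>v v) $ i = boost d e f c s v $ i"
    using i assms by (simp add: boost_def algebra_simps)
qed (use assms in \<open>simp add: boost_mat_def boost_def\<close>)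

lemma beta_boost:
  assumes ef: "orthonormal_pair d e f"
    and v: "v \<in> carrier_vec (d+1)" and w: "w \<in> carrier_vec (d+1)"
    and cs: "c\<^sup>2 - s\<^sup>2 = 1"
  shows "beta d (boost d e f c s v) (boost d e f c s w) = beta d v w"
proof -
  define p q P Q where "p = beta d v e" and "q = beta d v f" and "P = beta d w e" and "Q = beta d w f"
  have "beta d (boost d e f c s v) (boost d e f c s w)
    = beta d v w + (p * P - q * Q) * (c\<^sup>2 - s\<^sup>2 - 1)"
    using ef v w beta_commute[of d e w] beta_commute[of d f w] beta_commute[of d f e]
    by (simp add: orthonormal_pair_def boost_def beta_bilinear p_def q_def P_def Q_def
        power2_eq_square algebra_simps)
  with cs show ?thesis
    by simp
qed

lemma boost_boost:
  assumes ef: "orthonormal_pair d e f" and v: "v \<in> carrier_vec (d+1)"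
  shows "boost d e f c s (boost d e f c' s' v) = boost d e f (c * c' + s * s') (c * s' + s * c') v"
proof -
  define p q u where "p = beta d v e" and "q = beta d v f" and "u = boost d e f c' s' v"
  have carr: "e \<in> carrier_vec (d+1)" "f \<in> carrier_vec (d+1)"
    using ef by (simp_all add: orthonormal_pair_def)
  have ue: "beta d u e = c' * p - s' * q" and uf: "beta d u f = c' * q - s' * p"
    using ef v beta_commute[of d f e]
    by (simp_all add: orthonormal_pair_def u_def boost_def beta_bilinear p_def q_def algebra_simps)
  have "boost d e f c s u = u + ((c - 1) * (c' * p - s' * q) - s * (c' * q - s' * p)) \<cdot>\<^sub>v e
      + (s * (c' * p - s' * q) - (c - 1) * (c' * q - s' * p)) \<cdot>\<^sub>v f"
    unfolding boost_def[of d e f c s u] ue uf ..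
  also have "\<dots> = boost d e f (c * c' + s * s') (c * s' + s * c') v"
    using v carr by (intro eq_vecI)
      (simp_all add: u_def boost_def p_def[symmetric] q_def[symmetric] algebra_simps)
  finally show ?thesis
    by (simp add: u_def)
qed

lemma boost_1_0:
  assumes "v \<in> carrier_vec (d+1)" "e \<in> carrier_vec (d+1)" "f \<in> carrier_vec (d+1)"
  shows "boost d e f 1 0 v = v"
  using assms by (intro eq_vecI) (auto simp: boost_def)

lemma map_mat_cnj_boost_mat:
  assumes "e \<in> carrier_vec (d+1)" "f \<in> carrier_vec (d+1)"
  shows "map_mat cnj (boost_mat d (cvec e) (cvec f) c s) = boost_mat d (cvec e) (cvec f) (cnj c) (cnj s)"
  using assms by (intro eq_matI) (auto simp: boost_mat_def eta_def)

lemma eq_mat_if_mult_vec_eq: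
  fixes A B :: "'a::semiring_1 mat"
  assumes "A \<in> carrier_mat n m" "B \<in> carrier_mat n m"
    and "\<And>v. v \<in> carrier_vec m \<Longrightarrow> A *\<^sub>v v = B *\<^sub>v v"
  shows "A = B"
proof (rule eq_matI)
  fix i j assume "i < dim_row B" "j < dim_col B"
  then have "A $$ (i, j) = (A *\<^sub>v unit_vec m j) $ i" and "B $$ (i, j) = (B *\<^sub>v unit_vec m j) $ i"
    using assms(1,2) by simp_all
  then show "A $$ (i, j) = B $$ (i, j)"
    using assms(3)[of "unit_vec m j"] by simp
qed (use assms(1,2) in auto)

lemma boost_mat_mult:
  assumes ef: "orthonormal_pair d e f"
  shows "boost_mat d e f c s * boost_mat d e f c' s'
    = boost_mat d e f (c * c' + s * s') (c * s' + s * c')"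
proof (rule eq_mat_if_mult_vec_eq)
  have carr: "e \<in> carrier_vec (d+1)" "f \<in> carrier_vec (d+1)"
    using ef by (simp_all add: orthonormal_pair_def)
  fix v :: "complex vec" assume v: "v \<in> carrier_vec (d+1)"
  then show "boost_mat d e f c s * boost_mat d e f c' s' *\<^sub>v v
      = boost_mat d e f (c * c' + s * s') (c * s' + s * c') *\<^sub>v v"
    using carr boost_carrier[OF v carr]
    by (simp add: assoc_mult_mat_vec[OF boost_mat_carrier boost_mat_carrier] boost_mat_mult_vec
        boost_boost[OF ef])
qed (use mult_carrier_mat[OF boost_mat_carrier boost_mat_carrier] boost_mat_carrier in auto)

lemma boost_mat_in_GC:
  assumes ef: "orthonormal_pair d e f" and cs': "c'\<^sup>2 - s'\<^sup>2 = 1"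
    and c: "c = c' * c' + s' * s'" and s: "s = c' * s' + s' * c'"
  shows "boost_mat d e f c s \<in> GC d"
proof -
  have "c\<^sup>2 - s\<^sup>2 = (c'\<^sup>2 - s'\<^sup>2)\<^sup>2"
    unfolding c s by (simp add: power2_eq_square algebra_simps)
  with cs' have cs: "c\<^sup>2 - s\<^sup>2 = 1"
    by simp
  have pres: "beta d (boost_mat d e f a b *\<^sub>v z) (boost_mat d e f a b *\<^sub>v w) = beta d z w"
    if "a\<^sup>2 - b\<^sup>2 = 1" "z \<in> carrier_vec (d+1)" "w \<in> carrier_vec (d+1)" for a b z w
    using that ef by (simp add: orthonormal_pair_def boost_mat_mult_vec beta_boost)
  have "det (boost_mat d e f c s) = det (boost_mat d e f c' s' * boost_mat d e f c' s')"
    by (simp add: boost_mat_mult[OF ef] c s)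
  also have "\<dots> = det (boost_mat d e f c' s') * det (boost_mat d e f c' s')"
    by (rule det_mult) (rule boost_mat_carrier)+
  also have "\<dots> = 1"
    using boost_mat_carrier pres[OF cs'] by (rule det_square_if_preserves_beta)
  finally have "det (boost_mat d e f c s) = 1" .
  then show ?thesis
    using boost_mat_carrier pres[OF cs] by (simp add: GC_def)
qed

lemma Im_boost_imaginary:
  fixes x e f :: "real vec"
  assumes "x \<in> carrier_vec (d+1)" "e \<in> carrier_vec (d+1)" "f \<in> carrier_vec (d+1)"
  shows "map_vec Im (boost d (cvec e) (cvec f) 0 (\<i> * complex_of_real t) (cvec x))
    = (t * beta d x e) \<cdot>\<^sub>v f - (t * beta d x f) \<cdot>\<^sub>v e"
  using assms by (intro eq_vecI) (simp_all add: boost_def beta_cvec)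

lemma GXi_if_Im_boosts_in_Vplus:
  fixes x y e f :: "real vec"
  assumes ef: "orthonormal_pair d e f" and x: "x \<in> dS d" and y: "y \<in> dS d"
    and z: "map_vec Im (boost d (cvec e) (cvec f) 0 \<i> (cvec x)) \<in> Vplus d"
    and w: "map_vec Im (boost d (cvec e) (cvec f) 0 (-\<i>) (cvec y)) \<in> Vplus d"
  shows "(cvec x, cvec y) \<in> GXi d"
proof -
  let ?E = "cvec e" and ?F = "cvec f"
  have EF: "orthonormal_pair d ?E ?F"
    using ef by (rule orthonormal_pair_cvec)
  have carr: "e \<in> carrier_vec (d+1)" "f \<in> carrier_vec (d+1)"
    using ef by (simp_all add: orthonormal_pair_def)
  then have Ecarr: "?E \<in> carrier_vec (d+1)" "?F \<in> carrier_vec (d+1)"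
    by simp_all
  have X: "cvec x \<in> carrier_vec (d+1)" "beta d (cvec x) (cvec x) = -1"
    and Y: "cvec y \<in> carrier_vec (d+1)" "beta d (cvec y) (cvec y) = -1"
    using x y by (simp_all add: dS_def beta_cvec)
  define g where "g = boost_mat d ?E ?F 0 (-\<i>)"
  define h where "h = complex_of_real (1 / sqrt 2)"
  have "h * h = 1 / 2"
    by (simp add: h_def flip: of_real_mult)
  \<comment> \<open>the square root of \<open>g\<close> is the boost with \<open>cosh = 1/\<surd>2\<close> and \<open>sinh = -\<i>/\<surd>2\<close>\<close>
  then have "g \<in> GC d"
    unfolding g_def using EF
    by (intro boost_mat_in_GC[of _ _ _ h "-\<i> * h"]) (auto simp: power2_eq_square algebra_simps)
  moreover have "boost d ?E ?F 0 \<i> (cvec x) \<in> XiPlus d" "boost d ?E ?F 0 (-\<i>) (cvec y) \<in> XiPlus d"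
    using z w X Y EF boost_carrier[OF X(1) Ecarr] boost_carrier[OF Y(1) Ecarr]
    by (simp_all add: XiPlus_def dSC_def beta_boost)
  moreover have "cvec x = g *\<^sub>v boost d ?E ?F 0 \<i> (cvec x)"
    unfolding g_def boost_mat_mult_vec[OF boost_carrier[OF X(1) Ecarr] Ecarr] boost_boost[OF EF X(1)]
    using boost_1_0[OF X(1) Ecarr] by simp
  moreover have "cvec y = map_mat cnj g *\<^sub>v boost d ?E ?F 0 (-\<i>) (cvec y)"
    unfolding g_def map_mat_cnj_boost_mat[OF carr]
      boost_mat_mult_vec[OF boost_carrier[OF Y(1) Ecarr] Ecarr] boost_boost[OF EF Y(1)]
    using boost_1_0[OF Y(1) Ecarr] by simp
  ultimately show ?thesis
    unfolding GXi_def by blast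
qed

lemma GXi_if_orthonormal_pair:
  fixes x y e f :: "real vec"
  assumes ef: "orthonormal_pair d e f" and x: "x \<in> dS d" and y: "y \<in> dS d"
    and xe: "beta d x e = p" and ye: "beta d y e = p"
    and xf: "beta d x f = - r" and yf: "beta d y f = r"
    and a: "r \<cdot>\<^sub>v e + p \<cdot>\<^sub>v f \<in> Vplus d"
  shows "(cvec x, cvec y) \<in> GXi d"
proof (rule GXi_if_Im_boosts_in_Vplus[OF ef x y])
  have carr: "e \<in> carrier_vec (d+1)" "f \<in> carrier_vec (d+1)"
    and ee: "beta d e e = 1" and ff: "beta d f f = -1" and fe: "beta d f e = 0"
    using ef beta_commute[of d f e] by (simp_all add: orthonormal_pair_def)
  have xy: "x \<in> carrier_vec (d+1)" "y \<in> carrier_vec (d+1)"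
    using x y by (simp_all add: dS_def)
  have Im_z: "map_vec Im (boost d (cvec e) (cvec f) 0 \<i> (cvec x)) = r \<cdot>\<^sub>v e + p \<cdot>\<^sub>v f"
    using Im_boost_imaginary[OF xy(1) carr, of 1] carr xe xf by (intro eq_vecI) auto
  have Im_w: "map_vec Im (boost d (cvec e) (cvec f) 0 (-\<i>) (cvec y)) = r \<cdot>\<^sub>v e - p \<cdot>\<^sub>v f"
    using Im_boost_imaginary[OF xy(2) carr, of "-1"] carr ye yf by (intro eq_vecI) auto
  show "map_vec Im (boost d (cvec e) (cvec f) 0 \<i> (cvec x)) \<in> Vplus d"
    using Im_z a by simp
  have aa: "beta d (r \<cdot>\<^sub>v e + p \<cdot>\<^sub>v f) (r \<cdot>\<^sub>v e + p \<cdot>\<^sub>v f) = r\<^sup>2 - p\<^sup>2"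
    and bb: "beta d (r \<cdot>\<^sub>v e - p \<cdot>\<^sub>v f) (r \<cdot>\<^sub>v e - p \<cdot>\<^sub>v f) = r\<^sup>2 - p\<^sup>2"
    and ab: "beta d (r \<cdot>\<^sub>v e + p \<cdot>\<^sub>v f) (r \<cdot>\<^sub>v e - p \<cdot>\<^sub>v f) = r\<^sup>2 + p\<^sup>2"
    using carr ee ff fe ef by (simp_all add: orthonormal_pair_def beta_bilinear power2_eq_square)
  have pos: "0 < r\<^sup>2 - p\<^sup>2"
    using a aa by (simp add: Vplus_def)
  have "r \<cdot>\<^sub>v e - p \<cdot>\<^sub>v f \<in> Vplus d"
  proof (rule Vplus_if_beta_pos[OF a])
    show "r \<cdot>\<^sub>v e - p \<cdot>\<^sub>v f \<in> carrier_vec (d+1)"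
      using carr by simp
    show "0 < beta d (r \<cdot>\<^sub>v e - p \<cdot>\<^sub>v f) (r \<cdot>\<^sub>v e - p \<cdot>\<^sub>v f)"
      using bb pos by simp
    show "0 < beta d (r \<cdot>\<^sub>v e + p \<cdot>\<^sub>v f) (r \<cdot>\<^sub>v e - p \<cdot>\<^sub>v f)"
      using ab pos zero_le_power2[of p] by linarith
  qed
  then show "map_vec Im (boost d (cvec e) (cvec f) 0 (-\<i>) (cvec y)) \<in> Vplus d"
    using Im_w by simp
qed

section \<open>Frames adapted to a pair of points\<close>

lemma exists_timelike_orthogonal:
  fixes f :: "real vec"
  assumes f: "f \<in> carrier_vec (d+1)" and ff: "beta d f f = -1"
  obtains t where "t \<in> carrier_vec (d+1)" "0 < beta d t t" "beta d t f = 0"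
proof
  define e0 :: "real vec" where "e0 = unit_vec (d+1) 0"
  have e0: "e0 \<in> carrier_vec (d+1)" "beta d e0 e0 = 1" "beta d e0 f = f $ 0"
    using f by (simp_all add: e0_def beta_def)
  show "e0 + (f $ 0) \<cdot>\<^sub>v f \<in> carrier_vec (d+1)"
    using e0 f by simp
  show "beta d (e0 + (f $ 0) \<cdot>\<^sub>v f) f = 0"
    using e0 f ff by (simp add: beta_bilinear)
  have "beta d (e0 + (f $ 0) \<cdot>\<^sub>v f) (e0 + (f $ 0) \<cdot>\<^sub>v f) = 1 + (f $ 0)\<^sup>2"
    using e0 f ff beta_commute[of d f e0] by (simp add: beta_bilinear power2_eq_square)
  then show "0 < beta d (e0 + (f $ 0) \<cdot>\<^sub>v f) (e0 + (f $ 0) \<cdot>\<^sub>v f)"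
    by (simp add: add_pos_nonneg)
qed

lemma exists_orthonormal_pair_near:
  fixes f m :: "real vec"
  assumes f: "f \<in> carrier_vec (d+1)" and ff: "beta d f f = -1"
    and m: "m \<in> carrier_vec (d+1)" and mf: "beta d m f = 0" and mm: "0 < beta d m m + 1"
  obtains e where "orthonormal_pair d e f" "(beta d m e)\<^sup>2 < beta d m m + 1"
proof -
  obtain t where t: "t \<in> carrier_vec (d+1)" "0 < beta d t t" "beta d t f = 0"
    using exists_timelike_orthogonal[OF f ff] .
  define A B C where "A = beta d m m" and "B = beta d m t" and "C = beta d t t"
  \<comment> \<open>tilting \<open>t\<close> towards \<open>m\<close> by \<open>\<beta>(m,t)\<close> makes \<open>(1 + A) W - \<beta>(m,w)\<^sup>2 = (1 + A) (C + B\<^sup>2)\<close>\<close>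
  define w where "w = t + B \<cdot>\<^sub>v m"
  define W where "W = beta d w w"
  have w: "w \<in> carrier_vec (d+1)" and wf: "beta d w f = 0" and mw: "beta d m w = B * (1 + A)"
    using t m mf by (simp_all add: w_def beta_bilinear A_def B_def algebra_simps)
  have W: "W = C + B\<^sup>2 * (2 + A)"
    using t m beta_commute[of d t m]
    by (simp add: W_def w_def beta_bilinear A_def B_def C_def power2_eq_square algebra_simps)
  have C: "0 < C"
    using t by (simp add: C_def)
  moreover have "0 \<le> B\<^sup>2 * (2 + A)"
    using mm by (simp add: A_def)
  ultimately have Wpos: "0 < W"
    unfolding W by linarith
  have "(1 + A) * W - (B * (1 + A))\<^sup>2 = (1 + A) * (C + B\<^sup>2)"
    unfolding W by (simp add: power2_eq_square algebra_simps)
  moreover have "0 < (1 + A) * (C + B\<^sup>2)"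
    using mm C by (simp add: A_def add_pos_nonneg)
  ultimately have "(B * (1 + A))\<^sup>2 < (1 + A) * W"
    by linarith
  then have near: "(beta d m w)\<^sup>2 / W < A + 1"
    using Wpos by (simp add: mw divide_less_eq algebra_simps)
  show thesis
  proof
    show "orthonormal_pair d ((1 / sqrt W) \<cdot>\<^sub>v w) f"
      using w f ff wf Wpos by (simp add: orthonormal_pair_def beta_bilinear W_def[symmetric])
    show "(beta d m ((1 / sqrt W) \<cdot>\<^sub>v w))\<^sup>2 < beta d m m + 1"
      using w Wpos near by (simp add: beta_bilinear power_divide A_def)
  qed
qed

lemma exists_orthonormal_pair_for_dS_pair:
  assumes x: "x \<in> dS d" and y: "y \<in> dS d" and gt: "-1 < beta d x y"
  obtains e f p r where "orthonormal_pair d e f"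
    "beta d x e = p" "beta d y e = p" "beta d x f = - r" "beta d y f = r" "p\<^sup>2 < r\<^sup>2"
proof -
  have xy: "x \<in> carrier_vec (d+1)" "y \<in> carrier_vec (d+1)"
    and xx: "beta d x x = -1" and yy: "beta d y y = -1"
    using x y by (simp_all add: dS_def)
  have yx: "beta d y x = beta d x y"
    by (rule beta_commute)
  define N where "N = sqrt (2 + 2 * beta d x y)"
  define r where "r = N / 2"
  define f where "f = (1 / N) \<cdot>\<^sub>v (x - y)"
  define m where "m = (1 / 2 :: real) \<cdot>\<^sub>v (x + y)"
  have N: "0 < N" "N * N = 2 + 2 * beta d x y"
    using gt by (simp_all add: N_def)
  have r: "r\<^sup>2 = (1 + beta d x y) / 2"
    using N by (simp add: r_def power2_eq_square field_simps)
  have fm: "f \<in> carrier_vec (d+1)" "m \<in> carrier_vec (d+1)"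
    using xy by (simp_all add: f_def m_def)
  have "beta d f f = (1 / N) * (1 / N) * (beta d x x - beta d x y - beta d y x + beta d y y)"
    using xy by (simp add: f_def beta_bilinear algebra_simps)
  also have "\<dots> = -1"
    using xx yy yx N gt by (simp add: field_simps)
  finally have ff: "beta d f f = -1" .
  have mf: "beta d m f = 0" and mm: "beta d m m + 1 = r\<^sup>2"
    using xy xx yy yx r by (simp_all add: f_def m_def beta_bilinear field_simps)
  have x_eq: "x = m + r \<cdot>\<^sub>v f" and y_eq: "y = m - r \<cdot>\<^sub>v f"
    using xy N by (auto simp: m_def f_def r_def field_simps)
  obtain e where ef: "orthonormal_pair d e f" and near: "(beta d m e)\<^sup>2 < beta d m m + 1"
    using exists_orthonormal_pair_near[OF fm(1) ff fm(2) mf] r mm gt by auto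
  have "beta d x e = beta d m e" "beta d y e = beta d m e" "beta d x f = - r" "beta d y f = r"
    using ef fm ff mf beta_commute[of d f e]
    by (simp_all add: x_eq y_eq orthonormal_pair_def beta_bilinear)
  with ef near mm show thesis
    by (intro that) simp_all
qed

lemma GXi_if_beta_gt:
  assumes x: "x \<in> dS d" and y: "y \<in> dS d" and gt: "-1 < beta d x y"
  shows "(cvec x, cvec y) \<in> GXi d"
proof -
  obtain e f p r where frame: "orthonormal_pair d e f"
    and xe: "beta d x e = p" and ye: "beta d y e = p"
    and xf: "beta d x f = - r" and yf: "beta d y f = r" and pr: "p\<^sup>2 < r\<^sup>2"
    using exists_orthonormal_pair_for_dS_pair[OF x y gt] .
  have carr: "e \<in> carrier_vec (d+1)" "f \<in> carrier_vec (d+1)"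
    and ee: "beta d e e = 1" and ff: "beta d f f = -1" and fe: "beta d f e = 0" and ef: "beta d e f = 0"
    using frame beta_commute[of d f e] by (simp_all add: orthonormal_pair_def)
  have xy: "x \<in> carrier_vec (d+1)" "y \<in> carrier_vec (d+1)"
    using x y by (simp_all add: dS_def)
  let ?a = "r \<cdot>\<^sub>v e + p \<cdot>\<^sub>v f"
  have "beta d ?a ?a = r\<^sup>2 - p\<^sup>2"
    using carr ee ff fe ef by (simp add: beta_bilinear power2_eq_square)
  with pr have a: "?a \<in> carrier_vec (d+1)" "0 < beta d ?a ?a"
    using carr by simp_all
  show ?thesis
  proof (cases "0 < ?a $ 0")
    case True
    with a have "?a \<in> Vplus d"
      by (simp add: Vplus_def)
    with frame x y xe ye xf yf show ?thesis
      by (rule GXi_if_orthonormal_pair)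
  next
    case False
    with a timelike_imp_nth_0_nonzero[of d ?a] have "r \<cdot>\<^sub>v (-1 \<cdot>\<^sub>v e) + (- p) \<cdot>\<^sub>v f \<in> Vplus d"
      using carr ee ff fe ef by (auto simp: Vplus_def beta_bilinear)
    moreover have "orthonormal_pair d (-1 \<cdot>\<^sub>v e) f"
      using frame by (simp add: orthonormal_pair_def beta_bilinear)
    ultimately show ?thesis
      using x y xe ye xf yf xy carr
      by (intro GXi_if_orthonormal_pair[of d "-1 \<cdot>\<^sub>v e" f x y "- p" r]) (simp_all add: beta_bilinear)
  qed
qed

theorem mainTheorem5:
  fixes d :: nat
  assumes "d \<ge> 1"
  shows "(\<forall>x \<in> dS d. \<forall>y \<in> dS d.
            ((cvec x, cvec y) \<in> GXi d \<longleftrightarrow> beta d x y > -1)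
          \<and> (beta d x y > -1 \<longleftrightarrow> beta d (x - y) (x - y) < 0))
       \<and> {x \<in> dS d. (cvec x, cvec (unit_vec (d+1) 1)) \<in> GXi d} = {x \<in> dS d. x $ 1 < 1}"
proof -
  have equiv: "((cvec x, cvec y) \<in> GXi d \<longleftrightarrow> -1 < beta d x y)
      \<and> (-1 < beta d x y \<longleftrightarrow> beta d (x - y) (x - y) < 0)"
    if "x \<in> dS d" "y \<in> dS d" for x y
    using beta_gt_if_GXi[OF that] GXi_if_beta_gt[OF that] beta_diff_self_dS[OF that] by auto
  have "(cvec x, cvec (unit_vec (d+1) 1)) \<in> GXi d \<longleftrightarrow> x $ 1 < 1" if "x \<in> dS d" for x
    using equiv[OF that unit_vec_in_dS[of 1 d]] beta_unit_vec[of x d 1] that assms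
    by (auto simp: dS_def)
  with equiv show ?thesis
    by auto
qed

end
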